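(* Let $\Phi:[0,\infty)\to(0,1]$ be a decreasing bijection and let $\phi=-\log\Phi$. Then \[ \int_0^1\frac{1}{u(1\vee\log\Phi^{-1}(u))}\,\mathrm{d}u=\infty \quad\text{if and only if}\quad \sum_{n=1}^\infty\frac{1}{1\vee\log\phi^{-1}(n)}=\infty. \]
   Context: $\Phi^{-1}$ and $\phi^{-1}$ denote the inverse functions of $\Phi$ and $\phi$. *)

theory Defs
  imports "HOL-Analysis.Analysis"
begin

end

theory Submission
  imports Defs "HOL-Analysis.Analysis"
begin

text \<open>Put \<open>f(u) = 1 / (1 \<or> log \<Phi>\<^sup>-\<^sup>1(u))\<close>; since \<open>\<phi>\<^sup>-\<^sup>1(n) = \<Phi>\<^sup>-\<^sup>1(e\<^sup>-\<^sup>n)\<close>, the series is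
  \<open>\<Sum>\<^sub>n\<^sub>\<ge>\<^sub>1 f(e\<^sup>-\<^sup>n)\<close>. As \<open>\<Phi>\<^sup>-\<^sup>1\<close> decreases, \<open>f\<close> is nondecreasing on \<open>(0,1]\<close>, and each block
  \<open>(e\<^sup>-\<^sup>k\<^sup>-\<^sup>1, e\<^sup>-\<^sup>k]\<close> has mass 1 for \<open>du/u\<close>, so the integral lies between \<open>\<Sum>\<^sub>k\<^sub>\<ge>\<^sub>1 f(e\<^sup>-\<^sup>k)\<close>
  and \<open>\<Sum>\<^sub>k\<^sub>\<ge>\<^sub>0 f(e\<^sup>-\<^sup>k)\<close>, which differ by the finite term \<open>f(1)\<close>.\<close>

lemma nn_integral_inverse_Ioc:
  fixes a b :: real
  assumes "0 < a" "a \<le> b"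
  shows "(\<integral>\<^sup>+ u \<in> {a<..b}. ennreal (1 / u) \<partial>lborel) = ennreal (ln b - ln a)"
proof -
  have "(\<integral>\<^sup>+ u \<in> {a<..b}. ennreal (1 / u) \<partial>lborel) = (\<integral>\<^sup>+ u \<in> {a..b}. ennreal (1 / u) \<partial>lborel)"
    by (rule nn_integral_cong_AE) (use AE_lborel_singleton[of a] in \<open>auto simp: indicator_def\<close>)
  also have "\<dots> = ennreal (ln b - ln a)"
    using assms by (intro nn_integral_FTC_Icc) (auto intro!: derivative_eq_intros)
  finally show ?thesis .
qed

definition exp_block :: "nat \<Rightarrow> real set" where
  "exp_block k = {exp (- real (Suc k))<..exp (- real k)}"

lemma exp_block_subset: "exp_block k \<subseteq> {0<..1}"
proof
  fix u
  assume "u \<in> exp_block k"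
  moreover have "0 < exp (- real (Suc k))" "exp (- real k) \<le> 1"
    by simp_all
  ultimately show "u \<in> {0<..1}"
    unfolding exp_block_def greaterThanAtMost_iff by linarith
qed

lemma disjoint_family_exp_block: "disjoint_family exp_block"
proof -
  have "exp_block m \<inter> exp_block n = {}" if "m < n" for m n
  proof -
    have "exp (- real n) \<le> exp (- real (Suc m))"
      using that by simp
    then show ?thesis
      by (auto simp: exp_block_def)
  qed
  then show ?thesis
    unfolding disjoint_family_on_def by (metis inf_commute linorder_neqE_nat)
qed

lemma exp_block_cover:
  assumes "u \<in> {0<..1}"
  obtains k where "u \<in> exp_block k"
proof
  define k where "k = nat \<lfloor>- ln u\<rfloor>"
  have "0 < u" "0 \<le> - ln u"
    using assms by simp_all
  then have "- real (Suc k) < ln u" "ln u \<le> - real k"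
    unfolding k_def by linarith+
  with \<open>0 < u\<close> show "u \<in> exp_block k"
    unfolding exp_block_def greaterThanAtMost_iff by (metis exp_less_mono exp_le_cancel_iff exp_ln)
qed

lemma nn_integral_exp_block: "(\<integral>\<^sup>+ u \<in> exp_block k. ennreal (1 / u) \<partial>lborel) = 1"
  unfolding exp_block_def by (subst nn_integral_inverse_Ioc) auto

lemma nn_integral_exp_block_series:
  fixes c :: "nat \<Rightarrow> ennreal"
  shows "(\<integral>\<^sup>+ u. (\<Sum>n. c n * ennreal (1 / u) * indicator (exp_block n) u) \<partial>lborel) = (\<Sum>n. c n)"
proof -
  have [measurable]: "(\<lambda>u. ennreal (1 / u) * indicator (exp_block n) u) \<in> borel_measurable lborel" for n
    unfolding exp_block_def by measurable
  have "(\<integral>\<^sup>+ u. (\<Sum>n. c n * ennreal (1 / u) * indicator (exp_block n) u) \<partial>lborel)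
      = (\<Sum>n. c n * (\<integral>\<^sup>+ u \<in> exp_block n. ennreal (1 / u) \<partial>lborel))"
    by (simp add: nn_integral_suminf nn_integral_cmult mult.assoc)
  then show ?thesis
    by (simp add: nn_integral_exp_block)
qed

lemma series_exp_block_eq:
  assumes "u \<in> exp_block k"
  shows "(\<Sum>n. ennreal (c n) * ennreal (1 / u) * indicator (exp_block n) u) = ennreal (c k / u)"
proof -
  have "0 < u"
    using assms exp_block_subset[of k] by auto
  then show ?thesis
    using ennreal_mult''[of "1 / u" "c k"]
    by (simp add: suminf_cmult_indicator[OF disjoint_family_exp_block assms])
qed

lemma step_functions_exp_block_bounds:
  fixes f :: "real \<Rightarrow> real"
  assumes mono: "\<And>u v. 0 < u \<Longrightarrow> u \<le> v \<Longrightarrow> v \<le> 1 \<Longrightarrow> f u \<le> f v"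
  shows "(\<Sum>n. ennreal (f (exp (- real (Suc n)))) * ennreal (1 / u) * indicator (exp_block n) u)
      \<le> ennreal (f u / u) * indicator {0<..1} u
    \<and> ennreal (f u / u) * indicator {0<..1} u
      \<le> (\<Sum>n. ennreal (f (exp (- real n))) * ennreal (1 / u) * indicator (exp_block n) u)"
proof (cases "u \<in> {0<..1}")
  case True
  then obtain k where k: "u \<in> exp_block k"
    by (rule exp_block_cover)
  then have "f (exp (- real (Suc k))) / u \<le> f u / u" "f u / u \<le> f (exp (- real k)) / u"
    using exp_block_subset[of k] by (auto simp: exp_block_def intro!: divide_right_mono mono)
  with True k show ?thesis
    by (simp add: series_exp_block_eq ennreal_leI)
next
  case False
  then have "u \<notin> exp_block n" for n
    using exp_block_subset by blast
  with False show ?thesis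
    by simp
qed

text \<open>No measurability of \<open>f\<close> is needed, since \<open>\<integral>\<^sup>+\<close> is monotone for arbitrary functions.\<close>

lemma log_integral_test_bounds:
  fixes f :: "real \<Rightarrow> real"
  assumes mono: "\<And>u v. 0 < u \<Longrightarrow> u \<le> v \<Longrightarrow> v \<le> 1 \<Longrightarrow> f u \<le> f v"
  shows "(\<Sum>n. ennreal (f (exp (- real (Suc n))))) \<le> (\<integral>\<^sup>+ u \<in> {0<..1}. ennreal (f u / u) \<partial>lborel)"
    and "(\<integral>\<^sup>+ u \<in> {0<..1}. ennreal (f u / u) \<partial>lborel) \<le> (\<Sum>n. ennreal (f (exp (- real n))))"
proof -
  have "(\<Sum>n. ennreal (f (exp (- real (Suc n)))))
      = (\<integral>\<^sup>+ u. (\<Sum>n. ennreal (f (exp (- real (Suc n)))) * ennreal (1 / u) * indicator (exp_block n) u) \<partial>lborel)"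
    by (rule nn_integral_exp_block_series[symmetric])
  also have "\<dots> \<le> (\<integral>\<^sup>+ u \<in> {0<..1}. ennreal (f u / u) \<partial>lborel)"
    using step_functions_exp_block_bounds[of f, OF mono] by (intro nn_integral_mono) blast
  finally show "(\<Sum>n. ennreal (f (exp (- real (Suc n))))) \<le> (\<integral>\<^sup>+ u \<in> {0<..1}. ennreal (f u / u) \<partial>lborel)" .
  have "(\<integral>\<^sup>+ u \<in> {0<..1}. ennreal (f u / u) \<partial>lborel)
      \<le> (\<integral>\<^sup>+ u. (\<Sum>n. ennreal (f (exp (- real n))) * ennreal (1 / u) * indicator (exp_block n) u) \<partial>lborel)"
    using step_functions_exp_block_bounds[of f, OF mono] by (intro nn_integral_mono) blast
  also have "\<dots> = (\<Sum>n. ennreal (f (exp (- real n))))"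
    by (rule nn_integral_exp_block_series)
  finally show "(\<integral>\<^sup>+ u \<in> {0<..1}. ennreal (f u / u) \<partial>lborel) \<le> (\<Sum>n. ennreal (f (exp (- real n))))" .
qed

lemma log_integral_test:
  fixes f :: "real \<Rightarrow> real"
  assumes mono: "\<And>u v. 0 < u \<Longrightarrow> u \<le> v \<Longrightarrow> v \<le> 1 \<Longrightarrow> f u \<le> f v"
  shows "(\<integral>\<^sup>+ u \<in> {0<..1}. ennreal (f u / u) \<partial>lborel) = \<infinity>
     \<longleftrightarrow> (\<Sum>n. ennreal (f (exp (- real (Suc n))))) = \<infinity>"
proof -
  note bounds = log_integral_test_bounds[of f, OF mono]
  have offset: "(\<Sum>n. ennreal (f (exp (- real n)))) = (\<Sum>n. ennreal (f (exp (- real (Suc n))))) + ennreal (f 1)"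
    using suminf_offset[of "\<lambda>n. ennreal (f (exp (- real n)))" 1] by (simp add: summableI)
  show ?thesis
  proof
    assume "(\<integral>\<^sup>+ u \<in> {0<..1}. ennreal (f u / u) \<partial>lborel) = \<infinity>"
    with bounds(2) have "(\<Sum>n. ennreal (f (exp (- real n)))) = \<infinity>"
      by (simp add: top_unique)
    then have "(\<Sum>n. ennreal (f (exp (- real (Suc n))))) + ennreal (f 1) = \<infinity>"
      unfolding offset .
    then show "(\<Sum>n. ennreal (f (exp (- real (Suc n))))) = \<infinity>"
      by simp
  next
    assume "(\<Sum>n. ennreal (f (exp (- real (Suc n))))) = \<infinity>"
    with bounds(1) show "(\<integral>\<^sup>+ u \<in> {0<..1}. ennreal (f u / u) \<partial>lborel) = \<infinity>"
      by (simp add: top_unique)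
  qed
qed

lemma the_inv_into_antimono:
  fixes f :: "'a::linorder \<Rightarrow> 'b::linorder"
  assumes inj: "inj_on f A"
    and anti: "\<And>x y. x \<in> A \<Longrightarrow> y \<in> A \<Longrightarrow> x \<le> y \<Longrightarrow> f y \<le> f x"
    and "u \<in> f ` A" "v \<in> f ` A" "u \<le> v"
  shows "the_inv_into A f v \<le> the_inv_into A f u"
proof (rule ccontr)
  assume "\<not> the_inv_into A f v \<le> the_inv_into A f u"
  then have "f (the_inv_into A f v) \<le> f (the_inv_into A f u)"
    using assms by (intro anti) (auto intro: the_inv_into_into)
  then have "u = v"
    using assms by (simp add: f_the_inv_into_f)
  with \<open>\<not> the_inv_into A f v \<le> the_inv_into A f u\<close> show False
    by simp
qed

lemma the_inv_into_minus_ln: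
  fixes f :: "'a \<Rightarrow> real"
  assumes inj: "inj_on f A" and pos: "\<And>x. x \<in> A \<Longrightarrow> 0 < f x" and "exp (- t) \<in> f ` A"
  shows "the_inv_into A (\<lambda>x. - ln (f x)) t = the_inv_into A f (exp (- t))"
proof (rule the_inv_into_f_eq)
  show "inj_on (\<lambda>x. - ln (f x)) A"
    using inj pos by (auto simp: inj_on_def)
  show "- ln (f (the_inv_into A f (exp (- t)))) = t"
    using assms by (simp add: f_the_inv_into_f)
  show "the_inv_into A f (exp (- t)) \<in> A"
    using assms by (auto intro: the_inv_into_into)
qed

lemma max_one_ln_mono:
  fixes x y :: real
  assumes "0 \<le> x" "x \<le> y"
  shows "max 1 (ln x) \<le> max 1 (ln y)"
proof (cases "x = 0")
  case False
  with assms have "ln x \<le> ln y"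
    by simp
  then show ?thesis
    by (simp add: max.coboundedI2 max.mono)
qed simp

theorem lemma2p2:
  fixes Phi :: "real \<Rightarrow> real"
  assumes bij: "bij_betw Phi {0..} {0<..1}"
    and decr: "\<And>x y. 0 \<le> x \<Longrightarrow> x \<le> y \<Longrightarrow> Phi y \<le> Phi x"
  shows "(\<integral>\<^sup>+ u \<in> {0<..1}. ennreal (1 / (u * max 1 (ln (the_inv_into {0..} Phi u)))) \<partial>lborel) = \<infinity>
     \<longleftrightarrow> (\<Sum>n. ennreal (1 / max 1 (ln (the_inv_into {0..} (\<lambda>x. - ln (Phi x)) (real (Suc n)))))) = \<infinity>"
proof -
  define f where "f u = 1 / max 1 (ln (the_inv_into {0..} Phi u))" for u
  have inj: "inj_on Phi {0..}" and img: "Phi ` {0..} = {0<..1}"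
    using bij by (auto simp: bij_betw_def)
  have f_mono: "f u \<le> f v" if "0 < u" "u \<le> v" "v \<le> 1" for u v
  proof -
    have "the_inv_into {0..} Phi v \<le> the_inv_into {0..} Phi u"
      using that img by (intro the_inv_into_antimono[OF inj]) (auto intro: decr)
    moreover have "0 \<le> the_inv_into {0..} Phi v"
      using that img the_inv_into_into[OF inj, of v "{0..}"] by auto
    ultimately show ?thesis
      unfolding f_def by (intro divide_left_mono max_one_ln_mono) auto
  qed
  have "the_inv_into {0..} (\<lambda>x. - ln (Phi x)) (real (Suc n)) = the_inv_into {0..} Phi (exp (- real (Suc n)))" for n
    using img by (intro the_inv_into_minus_ln[OF inj]) auto
  then have series: "(\<Sum>n. ennreal (1 / max 1 (ln (the_inv_into {0..} (\<lambda>x. - ln (Phi x)) (real (Suc n))))))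
      = (\<Sum>n. ennreal (f (exp (- real (Suc n)))))"
    by (simp only: f_def)
  have integrand: "1 / (u * max 1 (ln (the_inv_into {0..} Phi u))) = f u / u" for u
    by (simp add: f_def)
  show ?thesis
    unfolding series integrand by (rule log_integral_test[of f, OF f_mono])
qed

end
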